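(* Let $(G,\ell)$ be a complete edge-colored permutation graph, where $G=(V,E_1,\dots,E_k)$. Then $G$ does not contain a rainbow triangle, and for each $i\in\{1,\dots,k\}$ the monochromatic subgraph $G_{|i}$ together with $\ell$ is a simple permutation graph.
   Context: A complete $k$-edge-colored graph $G=(V,E_1,\dots,E_k)$ is the complete graph on a finite set $V$ with edges partitioned into $k$ nonempty color classes $E_i$; $G_{|i}=(V,E_i)$. A labeling is a bijection $\ell:V\to\{1,\dots,|V|\}$. A graph $(V,E)$ with labeling $\ell$ is a simple permutation graph of a permutation $\pi$ if for all $u,v$ with $\ell(u)>\ell(v)$: $\{u,v\}\in E$ iff $\pi^{-1}(\ell(u))<\pi^{-1}(\ell(v))$. $(G,\ell)$ is a complete edge-colored permutation graph if there exist permutations $\pi_1,\dots,\pi_k$ with $(G_{|i},\ell)$ a simple permutation graph of $\pi_i$ for all $i$. A rainbow triangle is a set of three vertices whose three edges have pairwise distinct colors. *)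

theory Defs
  imports "HOL-Combinatorics.Permutations"
begin

definition all_edges :: "'a set \<Rightarrow> 'a set set" where
  "all_edges V = {{u, v} | u v. u \<in> V \<and> v \<in> V \<and> u \<noteq> v}"

definition complete_k_edge_colored :: "'a set \<Rightarrow> nat \<Rightarrow> (nat \<Rightarrow> 'a set set) \<Rightarrow> bool" where
  "complete_k_edge_colored V k E \<longleftrightarrow>
     finite V \<and>
     (\<forall>i\<in>{1..k}. E i \<noteq> {}) \<and>
     (\<Union>i\<in>{1..k}. E i) = all_edges V \<and>
     (\<forall>i\<in>{1..k}. \<forall>j\<in>{1..k}. i \<noteq> j \<longrightarrow> E i \<inter> E j = {})"

definition labeling :: "'a set \<Rightarrow> ('a \<Rightarrow> nat) \<Rightarrow> bool" where
  "labeling V l \<longleftrightarrow> bij_betw l V {1..card V}"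

definition simple_perm_graph_of :: "'a set \<Rightarrow> 'a set set \<Rightarrow> ('a \<Rightarrow> nat) \<Rightarrow> (nat \<Rightarrow> nat) \<Rightarrow> bool" where
  "simple_perm_graph_of V E l \<pi> \<longleftrightarrow>
     \<pi> permutes {1..card V} \<and>
     (\<forall>u\<in>V. \<forall>v\<in>V. l u > l v \<longrightarrow>
        ({u, v} \<in> E \<longleftrightarrow> inv \<pi> (l u) < inv \<pi> (l v)))"

definition simple_perm_graph :: "'a set \<Rightarrow> 'a set set \<Rightarrow> ('a \<Rightarrow> nat) \<Rightarrow> bool" where
  "simple_perm_graph V E l \<longleftrightarrow> (\<exists>\<pi>. simple_perm_graph_of V E l \<pi>)"

definition complete_edge_colored_perm_graph ::
  "'a set \<Rightarrow> nat \<Rightarrow> (nat \<Rightarrow> 'a set set) \<Rightarrow> ('a \<Rightarrow> nat) \<Rightarrow> bool" where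
  "complete_edge_colored_perm_graph V k E l \<longleftrightarrow>
     complete_k_edge_colored V k E \<and> labeling V l \<and>
     (\<exists>\<pi>s. \<forall>i\<in>{1..k}. simple_perm_graph_of V (E i) l (\<pi>s i))"

definition rainbow_triangle :: "'a set \<Rightarrow> nat \<Rightarrow> (nat \<Rightarrow> 'a set set) \<Rightarrow> 'a set \<Rightarrow> bool" where
  "rainbow_triangle V k E T \<longleftrightarrow>
     (\<exists>x y z. T = {x, y, z} \<and> x \<in> V \<and> y \<in> V \<and> z \<in> V \<and>
        x \<noteq> y \<and> y \<noteq> z \<and> x \<noteq> z \<and>
        (\<exists>i\<in>{1..k}. \<exists>j\<in>{1..k}. \<exists>h\<in>{1..k}. i \<noteq> j \<and> j \<noteq> h \<and> i \<noteq> h \<and>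
           {x, y} \<in> E i \<and> {y, z} \<in> E j \<and> {x, z} \<in> E h))"

end

theory Submission
  imports Defs
begin

text \<open>Order the vertices of a triangle by their labels. In a simple permutation graph an edge
  between the smallest and the largest label is an inversion of \<open>\<pi>\<close>, and an inversion cannot be
  produced by two consecutive non-inversions; hence the color of the outer edge recurs on one of
  the two inner edges, and the triangle is not rainbow.\<close>

lemma sorted_triple_wlog:
  fixes f :: "'a \<Rightarrow> 'b::linorder"
  assumes sorted:
      "\<And>a b c. a \<in> A \<Longrightarrow> b \<in> A \<Longrightarrow> c \<in> A \<Longrightarrow> f a < f b \<Longrightarrow> f b < f c \<Longrightarrow> P a b c"
    and swap12: "\<And>a b c. P a b c \<Longrightarrow> P b a c"
    and swap23: "\<And>a b c. P a b c \<Longrightarrow> P a c b"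
    and "x \<in> A" "y \<in> A" "z \<in> A" "f x \<noteq> f y" "f y \<noteq> f z" "f x \<noteq> f z"
  shows "P x y z"
proof -
  consider "f x < f y" "f y < f z" | "f x < f z" "f z < f y" | "f y < f x" "f x < f z"
    | "f y < f z" "f z < f x" | "f z < f x" "f x < f y" | "f z < f y" "f y < f x"
    using assms(7-9) by (metis linorder_neqE)
  then show ?thesis
    by cases (use assms(4-6) in \<open>blast intro: sorted swap12 swap23\<close>)+
qed

lemma simple_perm_graph_of_edge_iff:
  assumes "simple_perm_graph_of V E l \<pi>" "u \<in> V" "v \<in> V" "l u < l v"
  shows "{u, v} \<in> E \<longleftrightarrow> inv \<pi> (l v) < inv \<pi> (l u)"
  using assms unfolding simple_perm_graph_of_def by (metis insert_commute)

lemma simple_perm_graph_of_outer_edge: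
  assumes "simple_perm_graph_of V E l \<pi>" "a \<in> V" "b \<in> V" "c \<in> V"
    and "l a < l b" "l b < l c" "{a, c} \<in> E"
  shows "{a, b} \<in> E \<or> {b, c} \<in> E"
proof -
  have "inv \<pi> (l c) < inv \<pi> (l a)"
    using simple_perm_graph_of_edge_iff[OF assms(1,2,4)] assms(5-7) by simp
  then have "inv \<pi> (l b) < inv \<pi> (l a) \<or> inv \<pi> (l c) < inv \<pi> (l b)"
    by linarith
  then show ?thesis
    using simple_perm_graph_of_edge_iff[OF assms(1,2,3,5)]
      simple_perm_graph_of_edge_iff[OF assms(1,3,4,6)] by blast
qed

lemma complete_k_edge_colored_disjoint:
  assumes "complete_k_edge_colored V k E" "p \<in> {1..k}" "q \<in> {1..k}" "p \<noteq> q"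
  shows "E p \<inter> E q = {}"
  using assms unfolding complete_k_edge_colored_def by simp

lemma complete_k_edge_colored_outer_color_repeats:
  assumes "complete_k_edge_colored V k E" "simple_perm_graph V (E h) l"
    and "a \<in> V" "b \<in> V" "c \<in> V" "l a < l b" "l b < l c"
    and "i \<in> {1..k}" "j \<in> {1..k}" "h \<in> {1..k}"
    and "{a, b} \<in> E i" "{b, c} \<in> E j" "{a, c} \<in> E h"
  shows "h = i \<or> h = j"
proof -
  obtain \<pi> where \<pi>: "simple_perm_graph_of V (E h) l \<pi>"
    using assms(2) unfolding simple_perm_graph_def by blast
  have "{a, b} \<in> E h \<or> {b, c} \<in> E h"
    using simple_perm_graph_of_outer_edge[OF \<pi> assms(3-7,13)] .
  then show ?thesis
    using complete_k_edge_colored_disjoint[OF assms(1)] assms(8-12) by blast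
qed

lemma complete_k_edge_colored_triangle_color_repeats:
  assumes "complete_k_edge_colored V k E" "\<forall>h\<in>{1..k}. simple_perm_graph V (E h) l"
    and "x \<in> V" "y \<in> V" "z \<in> V" "l x \<noteq> l y" "l y \<noteq> l z" "l x \<noteq> l z"
    and "i \<in> {1..k}" "j \<in> {1..k}" "h \<in> {1..k}"
    and "{x, y} \<in> E i" "{y, z} \<in> E j" "{x, z} \<in> E h"
  shows "i = j \<or> j = h \<or> i = h"
proof -
  define repeats where "repeats a b c \<longleftrightarrow>
    (\<forall>i\<in>{1..k}. \<forall>j\<in>{1..k}. \<forall>h\<in>{1..k}.
       {a, b} \<in> E i \<longrightarrow> {b, c} \<in> E j \<longrightarrow> {a, c} \<in> E h \<longrightarrow> i = j \<or> j = h \<or> i = h)"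
    for a b c
  have "repeats x y z"
  proof (rule sorted_triple_wlog[where f = l and A = V])
    show "repeats a b c" if "a \<in> V" "b \<in> V" "c \<in> V" "l a < l b" "l b < l c" for a b c
      unfolding repeats_def
      using complete_k_edge_colored_outer_color_repeats[OF assms(1) _ that] assms(2) by blast
    show "repeats b a c" "repeats a c b" if "repeats a b c" for a b c
      using that unfolding repeats_def by (simp_all add: insert_commute) blast+
  qed (use assms(3-8) in auto)
  then show ?thesis
    using assms(9-14) unfolding repeats_def by blast
qed

lemma complete_edge_colored_perm_graph_color_class:
  assumes "complete_edge_colored_perm_graph V k E l" "i \<in> {1..k}"
  shows "simple_perm_graph V (E i) l"
  using assms unfolding complete_edge_colored_perm_graph_def simple_perm_graph_def by blast

theorem proposition4p13:
  fixes V :: "'a set" and k :: nat and E :: "nat \<Rightarrow> 'a set set" and l :: "'a \<Rightarrow> nat"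
  assumes "complete_edge_colored_perm_graph V k E l"
  shows "(\<nexists>T. rainbow_triangle V k E T) \<and> (\<forall>i\<in>{1..k}. simple_perm_graph V (E i) l)"
proof
  have colored: "complete_k_edge_colored V k E" and "inj_on l V"
    using assms unfolding complete_edge_colored_perm_graph_def labeling_def bij_betw_def by blast+
  show classes: "\<forall>i\<in>{1..k}. simple_perm_graph V (E i) l"
    using complete_edge_colored_perm_graph_color_class[OF assms] by blast
  show "\<nexists>T. rainbow_triangle V k E T"
  proof
    assume "\<exists>T. rainbow_triangle V k E T"
    then obtain x y z i j h
      where vertices: "x \<in> V" "y \<in> V" "z \<in> V" "x \<noteq> y" "y \<noteq> z" "x \<noteq> z"
      and colors: "i \<in> {1..k}" "j \<in> {1..k}" "h \<in> {1..k}" "i \<noteq> j" "j \<noteq> h" "i \<noteq> h"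
      and edges: "{x, y} \<in> E i" "{y, z} \<in> E j" "{x, z} \<in> E h"
      unfolding rainbow_triangle_def by blast
    have "l x \<noteq> l y" "l y \<noteq> l z" "l x \<noteq> l z"
      using \<open>inj_on l V\<close> vertices by (auto dest: inj_onD)
    then show False
      using complete_k_edge_colored_triangle_color_repeats[OF colored classes vertices(1-3)]
        colors edges by blast
  qed
qed

end
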